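(* Let $n\in\mathbb N$, $q\in\mathbb N_0$ and $\beta_1,\dots,\beta_q\in\mathbb R$. Then there exists $N\in\mathbb N$ such that \[\max_{m\in\{1,\dots,N\}}\Big\|a\,(\sin(m\alpha_1),\dots,\sin(m\alpha_n))+\sum_{k=1}^q\sin(m\beta_k)B_k+mS\Big\|\ge\|S\|\] for all $a\in\mathbb C^n$ (a column vector), $\alpha_1,\dots,\alpha_n\in\mathbb R$, $B_1,\dots,B_q\in\mathbb C^{n\times n}$ and $S\in\mathrm{Skew}(n,\mathbb C)$.
   Context: $\|\cdot\|$ is the Frobenius norm on $\mathbb C^{n\times n}$; $a\,(\sin(m\alpha_1),\dots,\sin(m\alpha_n))$ is the $n\times n$ matrix obtained as the product of the column vector $a$ with the given row vector; $\mathrm{Skew}(n,\mathbb C)$ is the set of complex $n\times n$ matrices $S$ with $S^T=-S$. For $q=0$ the sum is empty. *)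

theory Defs
  imports "HOL-Analysis.Analysis"
begin

text \<open>Frobenius norm: for matrices of type complex^'n^'n, the library norm is the
  Euclidean (L2) norm of the vector of all entries, i.e. the Frobenius norm.\<close>

definition frob :: "complex^'n^'n \<Rightarrow> real" where
  "frob M = sqrt (\<Sum>i\<in>UNIV. \<Sum>j\<in>UNIV. (cmod (M $ i $ j))\<^sup>2)"

definition skew :: "complex^'n^'n \<Rightarrow> bool" where
  "skew S \<longleftrightarrow> transpose S = - S"

definition outer_sin :: "complex^'n \<Rightarrow> (real^'n) \<Rightarrow> nat \<Rightarrow> complex^'n^'n" where
  "outer_sin a \<alpha> m = (\<chi> i j. a $ i * complex_of_real (sin (real m * \<alpha> $ j)))"

end

theory Submission
  imports Defs
begin

(* Extend the matrices M m in the maximum to all integers m. The operator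
   f \<mapsto> f (m + 1) + f (m - 1) - 2 c f m multiplies sin (m \<theta>) by 2 cos \<theta> - 2 c and m by 2 - 2 c.
   Composing it for c = cos \<beta>\<^sub>k, k = 1..q, kills the B\<^sub>k terms, leaves a rank-one matrix
   a w\<^sup>T in place of the sine part, and turns m S into \<rho> m S with \<rho> > 0. Evaluated at m0 this is
   a combination of M (m0 - q), ..., M (m0 + q) with coefficients of total size at most 4\<^sup>q,
   and for skew S one has \<parallel>S\<parallel> \<le> 2 n\<^sup>2 \<parallel>S + a w\<^sup>T\<parallel>. Hence \<rho> m0 \<parallel>S\<parallel> \<le> 2 n\<^sup>2 4\<^sup>q max \<parallel>M m\<parallel>,
   and m0 large enough gives the claim. *)

definition sym_diff :: "real \<Rightarrow> (int \<Rightarrow> 'v::real_vector) \<Rightarrow> int \<Rightarrow> 'v" where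
  "sym_diff c f = (\<lambda>m. f (m + 1) + f (m - 1) - (2 * c) *\<^sub>R f m)"

fun sym_diffs :: "(nat \<Rightarrow> real) \<Rightarrow> nat \<Rightarrow> (int \<Rightarrow> 'v::real_vector) \<Rightarrow> int \<Rightarrow> 'v" where
  "sym_diffs g 0 f = f"
| "sym_diffs g (Suc k) f = sym_diff (g (Suc k)) (sym_diffs g k f)"

lemma sym_diffs_add:
  "sym_diffs g k (\<lambda>m. f m + h m) = (\<lambda>m. sym_diffs g k f m + sym_diffs g k h m)"
  by (induction k) (auto simp: sym_diff_def algebra_simps)

lemma sym_diffs_zero: "sym_diffs g k (\<lambda>m. 0) = (\<lambda>m. 0)"
  by (induction k) (auto simp: sym_diff_def)

lemma sym_diffs_sum:
  assumes "finite A"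
  shows "sym_diffs g k (\<lambda>m. \<Sum>x\<in>A. F x m) m = (\<Sum>x\<in>A. sym_diffs g k (F x) m)"
  using assms by (induction A rule: finite_induct) (simp_all add: sym_diffs_zero sym_diffs_add)

lemma linear_sym_diffs:
  assumes "linear h"
  shows "h (sym_diffs g k f m) = sym_diffs g k (\<lambda>j. h (f j)) m"
  by (induction k arbitrary: m)
    (simp_all add: sym_diff_def linear_add[OF assms] linear_diff[OF assms] linear_scale[OF assms])

lemma norm_sym_diffs_le:
  assumes "\<And>i. \<bar>g i\<bar> \<le> 1" and "\<And>j. \<bar>j - m\<bar> \<le> int k \<Longrightarrow> norm (f j) \<le> L"
  shows "norm (sym_diffs g k f m) \<le> 4 ^ k * L"
  using assms(2)
proof (induction k arbitrary: m)
  case (Suc k)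
  have IH: "norm (sym_diffs g k f j) \<le> 4 ^ k * L" if "\<bar>j - m\<bar> \<le> 1" for j
    using that by (intro Suc.IH Suc.prems) auto
  have "norm ((2 * g (Suc k)) *\<^sub>R sym_diffs g k f m) = \<bar>2 * g (Suc k)\<bar> * norm (sym_diffs g k f m)"
    by simp
  also have "\<dots> \<le> 2 * (4 ^ k * L)"
    using IH[of m] assms(1)[of "Suc k"] by (intro mult_mono) auto
  finally have "norm ((2 * g (Suc k)) *\<^sub>R sym_diffs g k f m) \<le> 2 * (4 ^ k * L)" .
  moreover have "norm (sym_diffs g (Suc k) f m) \<le> norm (sym_diffs g k f (m + 1))
      + norm (sym_diffs g k f (m - 1)) + norm ((2 * g (Suc k)) *\<^sub>R sym_diffs g k f m)"
    unfolding sym_diffs.simps sym_diff_def by (smt (verit) norm_triangle_ineq norm_triangle_ineq4)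
  ultimately show ?case
    using IH[of "m + 1"] IH[of "m - 1"] by simp
qed simp

lemma sym_diff_eigen:
  assumes "\<And>m. \<phi> (m + 1) + \<phi> (m - 1) = 2 * c * \<phi> m"
  shows "sym_diff d (\<lambda>m. \<phi> m *\<^sub>R v) = (\<lambda>m. ((2 * c - 2 * d) * \<phi> m) *\<^sub>R v)"
proof
  fix m
  have "sym_diff d (\<lambda>m. \<phi> m *\<^sub>R v) m = (\<phi> (m + 1) + \<phi> (m - 1) - 2 * d * \<phi> m) *\<^sub>R v"
    by (simp add: sym_diff_def scaleR_add_left scaleR_diff_left)
  then show "sym_diff d (\<lambda>m. \<phi> m *\<^sub>R v) m = ((2 * c - 2 * d) * \<phi> m) *\<^sub>R v"
    by (simp add: assms left_diff_distrib)
qed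

lemma sym_diffs_eigen:
  assumes "\<And>m. \<phi> (m + 1) + \<phi> (m - 1) = 2 * c * \<phi> m"
  shows "sym_diffs g k (\<lambda>m. \<phi> m *\<^sub>R v) = (\<lambda>m. ((\<Prod>i=1..k. 2 * c - 2 * g i) * \<phi> m) *\<^sub>R v)"
proof (induction k)
  case (Suc k)
  define P where "P = (\<Prod>i=1..k. 2 * c - 2 * g i)"
  have "P * \<phi> (m + 1) + P * \<phi> (m - 1) = 2 * c * (P * \<phi> m)" for m
    by (simp add: assms flip: distrib_left)
  then have "sym_diff (g (Suc k)) (\<lambda>m. (P * \<phi> m) *\<^sub>R v)
    = (\<lambda>m. ((2 * c - 2 * g (Suc k)) * (P * \<phi> m)) *\<^sub>R v)"
    by (rule sym_diff_eigen)
  then show ?case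
    by (simp add: Suc P_def prod.nat_ivl_Suc' mult_ac)
qed simp

lemma sin_eigen:
  "sin ((of_int m + 1) * \<theta>) + sin ((of_int m - 1) * \<theta>) = 2 * cos \<theta> * sin (of_int m * (\<theta>::real))"
  by (simp add: distrib_right left_diff_distrib sin_add sin_diff)

lemma sym_diffs_sin:
  "sym_diffs g k (\<lambda>m. sin (of_int m * \<theta>) *\<^sub>R v)
    = (\<lambda>m. ((\<Prod>i=1..k. 2 * cos \<theta> - 2 * g i) * sin (of_int m * \<theta>)) *\<^sub>R v)"
  by (rule sym_diffs_eigen) (simp add: sin_eigen)

lemma sym_diffs_of_int:
  "sym_diffs g k (\<lambda>m. of_int m *\<^sub>R v) = (\<lambda>m. ((\<Prod>i=1..k. 2 - 2 * g i) * of_int m) *\<^sub>R v)"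
  using sym_diffs_eigen[of of_int 1 g k v] by simp

(* For cos \<beta> = 1 the sequence sin (m \<beta>) vanishes anyway; using 0 instead keeps every factor
   2 - 2 c positive, so that the linear sequence m S is not annihilated. *)
definition annihilating_coeffs :: "(nat \<Rightarrow> real) \<Rightarrow> nat \<Rightarrow> real" where
  "annihilating_coeffs \<beta> i = (if cos (\<beta> i) = 1 then 0 else cos (\<beta> i))"

lemma abs_annihilating_coeffs_le: "\<bar>annihilating_coeffs \<beta> i\<bar> \<le> 1"
  by (simp add: annihilating_coeffs_def abs_cos_le_one)

lemma annihilating_coeffs_factor_pos: "(\<Prod>i=1..q. 2 - 2 * annihilating_coeffs \<beta> i) > 0"
proof (rule prod_pos)
  fix i
  have "annihilating_coeffs \<beta> i < 1"
    using cos_le_one[of "\<beta> i"] by (auto simp: annihilating_coeffs_def less_le)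
  then show "2 - 2 * annihilating_coeffs \<beta> i > 0" by simp
qed

lemma sym_diffs_annihilating_sin:
  assumes "k \<in> {1..q}"
  shows "sym_diffs (annihilating_coeffs \<beta>) q (\<lambda>m. sin (of_int m * \<beta> k) *\<^sub>R v) = (\<lambda>m. 0)"
proof (cases "cos (\<beta> k) = 1")
  case True
  then obtain z :: int where "\<beta> k = of_int z * 2 * pi"
    by (auto simp: cos_one_2pi_int)
  then have "sin (of_int m * \<beta> k) = 0" for m :: int
    unfolding sin_zero_iff_int2 by (intro exI[of _ "2 * m * z"]) simp
  then show ?thesis by (simp add: sym_diffs_zero)
next
  case False
  then have factor_zero: "(\<Prod>i=1..q. 2 * cos (\<beta> k) - 2 * annihilating_coeffs \<beta> i) = 0"
    using assms by (intro prod_zero bexI[of _ k]) (auto simp: annihilating_coeffs_def)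
  show ?thesis unfolding sym_diffs_sin factor_zero by simp
qed

lemma skew_nth_swap:
  fixes T :: "'a::ab_group_add^'n^'n"
  assumes "transpose T = - T"
  shows "T $ j $ i = - T $ i $ j"
proof -
  have "transpose T $ i $ j = (- T) $ i $ j"
    by (simp only: assms)
  then show ?thesis
    by (simp add: transpose_def)
qed

lemma skew_entry_le_if_norm_le:
  fixes T :: "'a::real_normed_field^'n^'n"
  assumes skew: "transpose T = - T" and "norm (w j) \<le> norm (w i)"
  shows "norm (T $ i $ j) \<le> 2 * norm (T + (\<chi> i j. a $ i * w j))"
proof -
  define X where "X = T + (\<chi> i j. a $ i * w j)"
  have entry_le: "norm (X $ k $ l) \<le> norm X" for k l
    using Finite_Cartesian_Product.norm_nth_le[of "X $ k" l]
      Finite_Cartesian_Product.norm_nth_le[of X k] by linarith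
  have "T $ i $ i = - T $ i $ i"
    by (rule skew_nth_swap[OF skew])
  \<comment> \<open>eliminate a i from X i i = a i w i and X i j = T i j + a i w j\<close>
  then have eliminate_a: "w j * X $ i $ i - w i * X $ i $ j = - w i * T $ i $ j"
    by (simp add: X_def algebra_simps)
  have "norm (T $ i $ j) \<le> 2 * norm X"
  proof (cases "w i = 0")
    case True
    then have "X $ i $ j = T $ i $ j"
      using assms(2) by (simp add: X_def)
    then have "norm (T $ i $ j) \<le> norm X"
      using entry_le[of i j] by simp
    then show ?thesis
      using norm_ge_zero[of X] by linarith
  next
    case False
    have "norm (w i) * norm (T $ i $ j) = norm (w j * X $ i $ i - w i * X $ i $ j)"
      by (simp add: eliminate_a norm_mult)
    also have "\<dots> \<le> norm (w j) * norm (X $ i $ i) + norm (w i) * norm (X $ i $ j)"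
      by (metis norm_triangle_ineq4 norm_mult)
    also have "\<dots> \<le> norm (w i) * norm X + norm (w i) * norm X"
      using assms(2) entry_le[of i i] entry_le[of i j] by (intro add_mono mult_mono) auto
    also have "\<dots> = norm (w i) * (2 * norm X)"
      by simp
    finally show ?thesis
      using False by simp
  qed
  then show ?thesis
    by (simp add: X_def)
qed

lemma skew_entry_le:
  fixes T :: "'a::real_normed_field^'n^'n"
  assumes skew: "transpose T = - T"
  shows "norm (T $ i $ j) \<le> 2 * norm (T + (\<chi> i j. a $ i * w j))"
proof (cases "norm (w j) \<le> norm (w i)")
  case False
  have "T $ j $ i = - T $ i $ j"
    by (rule skew_nth_swap[OF skew])
  then show ?thesis
    using skew_entry_le_if_norm_le[OF skew, where i = j and j = i] False by simp
qed (rule skew_entry_le_if_norm_le[OF skew])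

lemma norm_skew_le_rank_one_perturbation:
  fixes T :: "'a::real_normed_field^'n^'n"
  assumes "transpose T = - T"
  shows "norm T \<le> 2 * real CARD('n) ^ 2 * norm (T + (\<chi> i j. a $ i * w j))"
proof -
  have norm_le_sum: "norm x \<le> (\<Sum>i\<in>UNIV. norm (x $ i))" for x :: "'b::real_normed_vector^'n"
    by (simp add: norm_vec_def L2_set_le_sum)
  have "norm T \<le> (\<Sum>i\<in>UNIV. \<Sum>j\<in>UNIV. norm (T $ i $ j))"
    by (rule order_trans[OF norm_le_sum sum_mono[OF norm_le_sum]])
  also have "\<dots> \<le> (\<Sum>i\<in>(UNIV::'n set). \<Sum>j\<in>(UNIV::'n set). 2 * norm (T + (\<chi> i j. a $ i * w j)))"
    by (intro sum_mono skew_entry_le assms)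
  finally show ?thesis
    by (simp add: power2_eq_square)
qed

lemma sym_diffs_sin_outer:
  fixes a :: "'a::real_normed_field^'n" and \<alpha> :: "real^'m"
  shows "sym_diffs g k (\<lambda>m. \<chi> i l. a $ i * of_real (sin (of_int m * \<alpha> $ l))) m
    = (\<chi> i l. a $ i * of_real ((\<Prod>r=1..k. 2 * cos (\<alpha> $ l) - 2 * g r) * sin (of_int m * \<alpha> $ l)))"
    (is "sym_diffs g k ?F m = ?R")
proof -
  have "sym_diffs g k ?F m $ i $ l = ?R $ i $ l" for i l
  proof -
    have "linear (\<lambda>X::'a^'m^'n. X $ i $ l)"
      using bounded_linear_compose[OF bounded_linear_vec_nth bounded_linear_vec_nth]
      by (rule bounded_linear.linear)
    then have "sym_diffs g k ?F m $ i $ l = sym_diffs g k (\<lambda>j. ?F j $ i $ l) m"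
      by (rule linear_sym_diffs)
    also have "(\<lambda>j. ?F j $ i $ l) = (\<lambda>j. sin (of_int j * \<alpha> $ l) *\<^sub>R a $ i)"
      by (simp add: fun_eq_iff scaleR_conv_of_real mult.commute)
    also have "sym_diffs g k \<dots> m
        = ((\<Prod>r=1..k. 2 * cos (\<alpha> $ l) - 2 * g r) * sin (of_int m * \<alpha> $ l)) *\<^sub>R a $ i"
      by (simp only: sym_diffs_sin)
    finally show ?thesis
      by (simp add: scaleR_conv_of_real mult.commute)
  qed
  then show ?thesis
    unfolding vec_eq_iff by blast
qed

lemma frob_eq_norm: "frob M = norm M"
  by (simp add: frob_def norm_vec_def L2_set_def sum_nonneg)

lemma norm_skew_le_window_max:
  fixes a :: "complex^'n" and \<alpha> :: "real^'n" and S :: "complex^'n^'n"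
  assumes "skew S" and "q < m0"
    and "2 * real CARD('n) ^ 2 * 4 ^ q \<le> (\<Prod>i=1..q. 2 - 2 * annihilating_coeffs \<beta> i) * real m0"
  shows "norm S \<le> (MAX m\<in>{m0-q..m0+q}. norm (outer_sin a \<alpha> m
            + (\<Sum>k=1..q. sin (real m * \<beta> k) *\<^sub>R B k) + real m *\<^sub>R S))"
    (is "_ \<le> ?L")
proof -
  define g where "g = annihilating_coeffs \<beta>"
  define \<rho> where "\<rho> = (\<Prod>i=1..q. 2 - 2 * g i)"
  define w where "w l = (\<Prod>r=1..q. 2 * cos (\<alpha> $ l) - 2 * g r) * sin (of_int (int m0) * \<alpha> $ l)" for l
  define M :: "int \<Rightarrow> complex^'n^'n" where "M = (\<lambda>j. (\<chi> i l. a $ i * of_real (sin (of_int j * \<alpha> $ l)))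
      + (\<Sum>k=1..q. sin (of_int j * \<beta> k) *\<^sub>R B k) + of_int j *\<^sub>R S)"
  have window: "norm (M j) \<le> ?L" if "\<bar>j - int m0\<bar> \<le> int q" for j
  proof -
    have "j \<ge> 0" and in_window: "nat j \<in> {m0-q..m0+q}"
      using that assms(2) by auto
    then have "M j = outer_sin a \<alpha> (nat j)
        + (\<Sum>k=1..q. sin (real (nat j) * \<beta> k) *\<^sub>R B k) + real (nat j) *\<^sub>R S"
      by (simp add: M_def outer_sin_def)
    then show ?thesis
      using in_window by (simp add: Max_ge)
  qed
  have "sym_diffs g q M (int m0) = (\<chi> i l. a $ i * of_real (w l)) + (\<rho> * real m0) *\<^sub>R S"
    by (simp add: M_def sym_diffs_add sym_diffs_sum sym_diffs_sin_outer sym_diffs_annihilating_sin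
        sym_diffs_of_int g_def \<rho>_def w_def)
  moreover have "transpose ((\<rho> * real m0) *\<^sub>R S) = - ((\<rho> * real m0) *\<^sub>R S)"
    using assms(1) by (simp add: skew_def transpose_scalar)
  moreover have "\<rho> > 0"
    unfolding \<rho>_def g_def by (rule annihilating_coeffs_factor_pos)
  ultimately have "\<rho> * real m0 * norm S \<le> 2 * real CARD('n) ^ 2 * norm (sym_diffs g q M (int m0))"
    using norm_skew_le_rank_one_perturbation[of "(\<rho> * real m0) *\<^sub>R S" a "\<lambda>l. of_real (w l)"]
    by (simp add: add.commute)
  also have "\<dots> \<le> 2 * real CARD('n) ^ 2 * (4 ^ q * ?L)"
    using norm_sym_diffs_le[of g, OF _ window] by (simp add: g_def abs_annihilating_coeffs_le)
  finally have "\<rho> * real m0 * norm S \<le> 2 * real CARD('n) ^ 2 * 4 ^ q * ?L"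
    by (simp add: mult_ac)
  moreover have "2 * real CARD('n) ^ 2 * 4 ^ q * norm S \<le> \<rho> * real m0 * norm S"
    using assms(3) by (intro mult_right_mono) (simp_all add: \<rho>_def g_def)
  ultimately have "(2 * real CARD('n) ^ 2 * 4 ^ q) * norm S \<le> (2 * real CARD('n) ^ 2 * 4 ^ q) * ?L"
    by linarith
  then show ?thesis
    by (rule mult_left_le_imp_le) simp
qed

theorem lemma3p19:
  fixes q :: nat and \<beta> :: "nat \<Rightarrow> real"
  shows "\<exists>N::nat. N \<ge> 1 \<and>
    (\<forall>(a::complex^'n) (\<alpha>::real^'n) (B::nat \<Rightarrow> complex^'n^'n) (S::complex^'n^'n).
       skew S \<longrightarrow>
       (MAX m\<in>{1..N}. frob (outer_sin a \<alpha> m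
            + (\<Sum>k=1..q. sin (real m * \<beta> k) *\<^sub>R B k)
            + real m *\<^sub>R S)) \<ge> frob S)"
proof -
  define \<rho> where "\<rho> = (\<Prod>i=1..q. 2 - 2 * annihilating_coeffs \<beta> i)"
  define K where "K = 2 * real CARD('n) ^ 2 * 4 ^ q"
  define m0 where "m0 = q + 1 + nat \<lceil>K / \<rho>\<rceil>"
  have "K / \<rho> \<le> real m0"
    unfolding m0_def by linarith
  moreover have "\<rho> > 0"
    unfolding \<rho>_def by (rule annihilating_coeffs_factor_pos)
  ultimately have m0_large: "K \<le> \<rho> * real m0"
    by (simp add: divide_le_eq mult.commute)
  have "q < m0"
    by (simp add: m0_def)
  show ?thesis
  proof (intro exI[of _ "m0 + q"] conjI allI impI)
    fix a :: "complex^'n" and \<alpha> :: "real^'n" and B :: "nat \<Rightarrow> complex^'n^'n" and S :: "complex^'n^'n"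
    assume "skew S"
    have "frob S \<le> (MAX m\<in>{m0-q..m0+q}. frob (outer_sin a \<alpha> m
            + (\<Sum>k=1..q. sin (real m * \<beta> k) *\<^sub>R B k) + real m *\<^sub>R S))"
      unfolding frob_eq_norm
      using \<open>skew S\<close> \<open>q < m0\<close> m0_large unfolding K_def \<rho>_def
      by (rule norm_skew_le_window_max)
    also have "\<dots> \<le> (MAX m\<in>{1..m0+q}. frob (outer_sin a \<alpha> m
            + (\<Sum>k=1..q. sin (real m * \<beta> k) *\<^sub>R B k) + real m *\<^sub>R S))"
      using \<open>q < m0\<close> by (intro Max_mono) auto
    finally show "frob S \<le> (MAX m\<in>{1..m0+q}. frob (outer_sin a \<alpha> m
            + (\<Sum>k=1..q. sin (real m * \<beta> k) *\<^sub>R B k) + real m *\<^sub>R S))" .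
  qed (use \<open>q < m0\<close> in simp)
qed

end
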